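(* Assume that for each $i=1,\dots,N$ the map $(t,\boldsymbol{\theta})\mapsto g(t,\mathbf{x}_i;\boldsymbol{\theta})$ is continuous on $[0,y_i]\times\mathbb{R}^m$. Fix $\phi>0$ and $\boldsymbol{\theta}\in\mathbb{R}^m$, and for each $i$ let $\Psi_i$ be a marked Poisson process on $[0,y_i]\times\mathbb{R}_+$ with intensity $\lambda_i(t,\omega;\phi)=\lambda_0(t,\mathbf{x}_i;\phi)\,p_{\mathrm{PG}}(\omega\mid 1,0)$. Then for every $i=1,\dots,N$, with probability one the sum $$H(\Psi_i)=\sum_{(t_j,\omega_j)\in\Psi_i}f(\omega_j,-g(t_j,\mathbf{x}_i;\boldsymbol{\theta}))$$ is absolutely convergent.
   Context: $y_i>0$, $\mathbf{x}_i\in\mathbb{R}^p$. $g:\mathbb{R}_+\times\mathbb{R}^p\times\mathbb{R}^m\to\mathbb{R}$ is a given function. $\sigma(z)=1/(1+e^{-z})$. $p_{\boldsymbol{\theta}}$ is the density of $\mathcal{N}(\mathbf{0},\mathbf{I}_m)$. $Z(t,\mathbf{x})=\int_{\mathbb{R}^m}\sigma(g(t,\mathbf{x};\boldsymbol{\theta}))\,p_{\boldsymbol{\theta}}(\boldsymbol{\theta})\,d\boldsymbol{\theta}$. For fixed $\rho>0$, $\lambda_0(t;\phi)=\phi\,t^{\rho-1}$ and $\lambda_0(t,\mathbf{x};\phi)=\lambda_0(t;\phi)/Z(t,\mathbf{x})$. $f(\omega,z)=\frac{z}{2}-\frac{z^2}{2}\omega-\log 2$. The Pólya–Gamma distribution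 $\mathrm{PG}(b,c)$ is the law of $\frac{1}{2\pi^2}\sum_{k=1}^\infty \frac{g_k}{(k-1/2)^2+c^2/(4\pi^2)}$ with $g_k$ i.i.d. $\mathrm{Gamma}(b,1)$; $p_{\mathrm{PG}}(\omega\mid b,c)$ is its density on $\mathbb{R}_+$. A marked Poisson process with intensity $\lambda(t,\omega)$ is a Poisson point process on the product space with that intensity. *)

theory Defs
  imports "HOL-Probability.Probability"
begin

definition sigmoid :: "real \<Rightarrow> real" where
  "sigmoid z = 1 / (1 + exp (- z))"

definition Zfun :: "(real \<Rightarrow> 'p \<Rightarrow> real^'m \<Rightarrow> real) \<Rightarrow> real \<Rightarrow> 'p \<Rightarrow> real" where
  "Zfun g t x = (\<integral>\<theta>. sigmoid (g t x \<theta>) * (\<Prod>j\<in>UNIV. std_normal_density (\<theta> $ j)) \<partial>lborel)"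

definition lambda0 :: "real \<Rightarrow> real \<Rightarrow> real \<Rightarrow> real" where
  "lambda0 \<rho> \<phi> t = \<phi> * t powr (\<rho> - 1)"

definition lambda0x :: "real \<Rightarrow> (real \<Rightarrow> 'p \<Rightarrow> real^'m \<Rightarrow> real) \<Rightarrow> real \<Rightarrow> real \<Rightarrow> 'p \<Rightarrow> real" where
  "lambda0x \<rho> g \<phi> t x = lambda0 \<rho> \<phi> t / Zfun g t x"

definition fPG :: "real \<Rightarrow> real \<Rightarrow> real" where
  "fPG \<omega> z = z / 2 - z^2 / 2 * \<omega> - ln 2"

definition gamma_density :: "real \<Rightarrow> real \<Rightarrow> real" where
  "gamma_density b x = (if 0 < x then x powr (b - 1) * exp (- x) / Gamma b else 0)"

(* PG(b,c): law of 1/(2 pi^2) sum_{k>=1} g_k / ((k-1/2)^2 + c^2/(4 pi^2)), g_k iid Gamma(b,1);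
   here k is re-indexed from 0, so (k-1/2) becomes (k+1/2). *)
definition PG_law :: "real \<Rightarrow> real \<Rightarrow> real measure" where
  "PG_law b c = distr (PiM (UNIV :: nat set) (\<lambda>k. density lborel (\<lambda>x. ennreal (gamma_density b x))))
      borel (\<lambda>gs. (1 / (2 * pi^2)) * (\<Sum>k. gs k / ((real k + 1/2)^2 + c^2 / (4 * pi^2))))"

definition p_PG :: "real \<Rightarrow> real \<Rightarrow> real \<Rightarrow> real" where
  "p_PG b c \<omega> = enn2real (RN_deriv lborel (PG_law b c) \<omega>)"

(* Poisson point process on R x R (realised as a random counting measure Psi)
   with intensity measure  A |-> int_A lam d(Lebesgue).  A process on a subset S
   with intensity lam is the same as one on R^2 with intensity (indicator S * lam). *)
definition poisson_process ::
  "'a measure \<Rightarrow> ('a \<Rightarrow> (real \<times> real) measure) \<Rightarrow> (real \<times> real \<Rightarrow> real) \<Rightarrow> bool" where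
  "poisson_process M \<Psi> lam \<longleftrightarrow>
     prob_space M \<and>
     (\<forall>s\<in>space M. sets (\<Psi> s) = sets borel \<and>
        (\<forall>A\<in>sets borel. emeasure (\<Psi> s) A \<in> insert \<infinity> (range of_nat))) \<and>
     (\<forall>A\<in>sets borel. (\<lambda>s. emeasure (\<Psi> s) A) \<in> borel_measurable M) \<and>
     (\<forall>A\<in>sets borel.
        let \<mu> = (\<integral>\<^sup>+ p. ennreal (lam p) * indicator A p \<partial>lborel) in
        (\<mu> = \<infinity> \<longrightarrow> (AE s in M. emeasure (\<Psi> s) A = \<infinity>)) \<and>
        (\<mu> < \<infinity> \<longrightarrow> (\<forall>n::nat. measure M {s\<in>space M. emeasure (\<Psi> s) A = of_nat n}
                        = exp (- enn2real \<mu>) * enn2real \<mu> ^ n / fact n))) \<and>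
     (\<forall>(F::nat set) A. finite F \<longrightarrow> (\<forall>i\<in>F. A i \<in> sets borel) \<longrightarrow> disjoint_family_on A F \<longrightarrow>
        prob_space.indep_vars M (\<lambda>_. borel) (\<lambda>i s. emeasure (\<Psi> s) (A i)) F)"

end

theory Submission
  imports Defs
begin

(* The intensity of Psi_i has finite total mass: t powr (rho - 1) is integrable on [0, y_i]
   because rho > 0, p_PG(. | 1, 0) is a sub-probability density, and Z(., x_i) is bounded away
   from 0 on [0, y_i], since sigmoid o g is bounded below on the compact set [0, y_i] x [-1, 1]^m.
   Hence almost surely Psi_i has finitely many points, all of them in [0, y_i] x R_+, where every
   summand is finite.  For the random counting measure Psi_i s the last step reads: a finite
   measure with values in N u {oo} integrates every real measurable function to a finite value. *)

lemma sigmoid_pos: "0 < sigmoid a"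
  unfolding sigmoid_def by (simp add: add_pos_pos)

lemma sigmoid_mono: "a \<le> b \<Longrightarrow> sigmoid a \<le> sigmoid b"
  unfolding sigmoid_def by (intro divide_left_mono) (auto intro!: add_pos_pos mult_pos_pos)

lemma std_normal_density_ge_at_one: "\<bar>x\<bar> \<le> 1 \<Longrightarrow> std_normal_density 1 \<le> std_normal_density x"
  unfolding normal_density_def
  by (intro mult_left_mono) (auto simp: abs_le_square_iff power2_eq_square abs_square_le_1[of x, unfolded power2_eq_square])

lemma nn_integral_gamma_density:
  assumes "0 < b"
  shows "(\<integral>\<^sup>+ x. ennreal (gamma_density b x) \<partial>lborel) = 1"
proof -
  have "((\<lambda>t. t powr (b - 1) / exp t / Gamma b) has_integral Gamma b / Gamma b) {0..}"
    using Gamma_integral_real[OF assms] by (rule has_integral_divide)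
  then have "((\<lambda>t. t powr (b - 1) / exp t / Gamma b) has_integral 1) {0..}"
    using Gamma_real_pos[OF assms] by simp
  then have "(\<integral>\<^sup>+ x. ennreal (x powr (b - 1) / exp x / Gamma b) * indicator {0..} x \<partial>lborel) = 1"
    using assms by (subst nn_integral_has_integral_lebesgue') auto
  moreover have "ennreal (gamma_density b x) = ennreal (x powr (b - 1) / exp x / Gamma b) * indicator {0..} x" for x
    by (cases "0 < x") (auto simp: gamma_density_def exp_minus field_simps indicator_def)
  ultimately show ?thesis by simp
qed

lemma prob_space_PG_law:
  assumes "0 < b"
  shows "prob_space (PG_law b c)"
proof -
  have "(\<lambda>x. ennreal (gamma_density b x)) \<in> borel_measurable lborel"
    unfolding gamma_density_def by measurable
  then have "prob_space (density lborel (\<lambda>x. ennreal (gamma_density b x)))"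
    by (intro prob_spaceI) (simp add: emeasure_density nn_integral_gamma_density[OF assms])
  then have "prob_space (PiM (UNIV :: nat set) (\<lambda>k. density lborel (\<lambda>x. ennreal (gamma_density b x))))"
    by (intro prob_space_PiM)
  then show ?thesis unfolding PG_law_def
    by (rule prob_space.prob_space_distr) measurable
qed

lemma nn_integral_RN_deriv_le: "(\<integral>\<^sup>+ x. RN_deriv M N x \<partial>M) \<le> emeasure N (space N)"
proof (cases "\<exists>f. f \<in> borel_measurable M \<and> density M f = N")
  case True
  then have N: "density M (RN_deriv M N) = N" by (metis RN_derivI)
  have "(\<integral>\<^sup>+ x. RN_deriv M N x \<partial>M) = emeasure (density M (RN_deriv M N)) (space M)"
    by (simp add: emeasure_density)
  also have "\<dots> = emeasure N (space N)"
    by (metis N space_density)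
  finally show ?thesis by simp
qed (auto simp: RN_deriv_def)

lemma nn_integral_p_PG_le_1:
  assumes "0 < b"
  shows "(\<integral>\<^sup>+ \<omega>. ennreal (p_PG b c \<omega>) \<partial>lborel) \<le> 1"
proof -
  interpret PG: prob_space "PG_law b c" using assms by (rule prob_space_PG_law)
  have "(\<integral>\<^sup>+ \<omega>. ennreal (p_PG b c \<omega>) \<partial>lborel) \<le> (\<integral>\<^sup>+ \<omega>. RN_deriv lborel (PG_law b c) \<omega> \<partial>lborel)"
    unfolding p_PG_def by (intro nn_integral_mono) (simp add: ennreal_enn2real_if)
  also have "\<dots> \<le> emeasure (PG_law b c) (space (PG_law b c))"
    by (rule nn_integral_RN_deriv_le)
  finally show ?thesis by (simp add: PG.emeasure_space_1)
qed

lemma nn_integral_powr_less_top: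
  assumes "0 < \<rho>" "0 \<le> y"
  shows "(\<integral>\<^sup>+ t. ennreal (indicator {0..y} t * t powr (\<rho> - 1)) \<partial>lborel) < \<infinity>"
proof -
  obtain I where "((\<lambda>t. t powr (\<rho> - 1)) has_integral I) {0..y}"
    using integrable_on_powr_from_0[of "\<rho> - 1" y] assms by auto
  then have "(\<integral>\<^sup>+ t. ennreal (indicator {0..y} t * t powr (\<rho> - 1)) \<partial>lborel) = I"
    by (intro nn_integral_has_integral_lebesgue) simp_all
  then show ?thesis by simp
qed

lemma nn_integral_lborel_pair_mult:
  fixes f :: "'a::euclidean_space \<Rightarrow> ennreal" and h :: "'b::euclidean_space \<Rightarrow> ennreal"
  assumes f: "f \<in> borel_measurable lborel" and h: "h \<in> borel_measurable lborel"
  shows "(\<integral>\<^sup>+ p. f (fst p) * h (snd p) \<partial>lborel) = (\<integral>\<^sup>+ t. f t \<partial>lborel) * (\<integral>\<^sup>+ \<omega>. h \<omega> \<partial>lborel)"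
proof -
  have "(\<integral>\<^sup>+ p. f (fst p) * h (snd p) \<partial>lborel) = (\<integral>\<^sup>+ p. f (fst p) * h (snd p) \<partial>(lborel \<Otimes>\<^sub>M lborel))"
    by (simp add: lborel_prod)
  also have "\<dots> = (\<integral>\<^sup>+ t. \<integral>\<^sup>+ \<omega>. f t * h \<omega> \<partial>lborel \<partial>lborel)"
    using f h by (subst lborel.nn_integral_fst[symmetric]) simp_all
  also have "\<dots> = (\<integral>\<^sup>+ t. f t * (\<integral>\<^sup>+ \<omega>. h \<omega> \<partial>lborel) \<partial>lborel)"
    using h by (simp add: nn_integral_cmult)
  also have "\<dots> = (\<integral>\<^sup>+ t. f t \<partial>lborel) * (\<integral>\<^sup>+ \<omega>. h \<omega> \<partial>lborel)"
    using f by (rule nn_integral_multc)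
  finally show ?thesis .
qed

lemma integral_ge_on_set:
  fixes f :: "'a \<Rightarrow> real"
  assumes f: "integrable M f" and C: "C \<in> sets M" "emeasure M C < \<infinity>"
    and nonneg: "\<And>x. x \<in> space M \<Longrightarrow> 0 \<le> f x" and ge: "\<And>x. x \<in> C \<Longrightarrow> a \<le> f x"
  shows "a * measure M C \<le> (\<integral>x. f x \<partial>M)"
proof -
  have "a * measure M C = (\<integral>x. indicator C x * a \<partial>M)"
    using C by (simp add: measure_def)
  also have "\<dots> \<le> (\<integral>x. f x \<partial>M)"
  proof (rule integral_mono)
    show "integrable M (\<lambda>x. indicator C x * a)"
      using C by (intro integrable_mult_left) auto
    show "indicator C x * a \<le> f x" if "x \<in> space M" for x
      using nonneg[OF that] ge by (cases "x \<in> C") auto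
  qed (rule f)
  finally show ?thesis .
qed

lemma sigmoid_times_std_normal_product_ge:
  fixes \<theta> :: "real^'m"
  assumes z: "\<bar>z\<bar> \<le> G" and \<theta>: "\<forall>j. \<bar>\<theta> $ j\<bar> \<le> 1"
  shows "sigmoid (- G) * std_normal_density 1 ^ CARD('m)
    \<le> sigmoid z * (\<Prod>j\<in>UNIV. std_normal_density (\<theta> $ j))"
proof -
  have pos: "0 < std_normal_density 1" by (simp add: normal_density_def)
  have "std_normal_density 1 ^ CARD('m) = (\<Prod>j\<in>(UNIV::'m set). std_normal_density 1)"
    by simp
  also have "\<dots> \<le> (\<Prod>j\<in>UNIV. std_normal_density (\<theta> $ j))"
    using \<theta> pos by (intro prod_mono) (auto intro: std_normal_density_ge_at_one less_imp_le)
  finally show ?thesis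
    using z pos by (intro mult_mono sigmoid_mono) (auto intro: less_imp_le sigmoid_pos)
qed

lemma Zfun_bounded_below:
  fixes g :: "real \<Rightarrow> 'p \<Rightarrow> real^'m \<Rightarrow> real"
  assumes T: "compact T" and cont: "continuous_on (T \<times> UNIV) (\<lambda>(t, th). g t x th)"
  obtains c where "0 < c" "\<And>t. t \<in> T \<Longrightarrow> Zfun g t x = 0 \<or> c \<le> Zfun g t x"
  \<comment> \<open>\<open>Zfun g t x = 0\<close> is the junk value of a non-integrable Bochner integral\<close>
proof -
  define C :: "(real^'m) set" where "C = cbox (\<chi> _. -1) (\<chi> _. 1)"
  have memC: "th \<in> C \<longleftrightarrow> (\<forall>j. \<bar>th $ j\<bar> \<le> 1)" for th
    unfolding C_def mem_box_cart by (auto simp: abs_le_iff)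
  have "compact ((\<lambda>(t, th). g t x th) ` (T \<times> C))"
    using T by (intro compact_continuous_image continuous_on_subset[OF cont] compact_Times)
      (auto simp: C_def)
  then obtain G where G: "\<And>t th. t \<in> T \<Longrightarrow> th \<in> C \<Longrightarrow> \<bar>g t x th\<bar> \<le> G"
    by (fastforce dest!: compact_imp_bounded simp: bounded_iff)
  define c0 where "c0 = sigmoid (- G) * std_normal_density 1 ^ CARD('m)"
  have "0 < std_normal_density 1" by (simp add: normal_density_def)
  then have c0: "0 < c0" unfolding c0_def by (simp add: sigmoid_pos)
  have "C \<noteq> {}" using memC[of 0] by auto
  then have vol: "measure lborel C = 2 ^ CARD('m)"
    unfolding C_def by (subst content_cbox_cart) (auto simp: prod_constant)
  show thesis
  proof
    show "0 < c0 * measure lborel C" using c0 vol by simp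
    fix t assume t: "t \<in> T"
    define F where "F \<theta> = sigmoid (g t x \<theta>) * (\<Prod>j\<in>UNIV. std_normal_density (\<theta> $ j))" for \<theta>
    have "c0 * measure lborel C \<le> (\<integral>\<theta>. F \<theta> \<partial>lborel)" if F: "integrable lborel F"
    proof (rule integral_ge_on_set[OF F])
      show "C \<in> sets lborel" "emeasure lborel C < \<infinity>"
        unfolding C_def by (simp, intro emeasure_bounded_finite bounded_cbox)
      show "0 \<le> F \<theta>" for \<theta>
        unfolding F_def by (intro mult_nonneg_nonneg prod_nonneg) (auto intro: less_imp_le sigmoid_pos)
      show "c0 \<le> F \<theta>" if "\<theta> \<in> C" for \<theta>
        unfolding c0_def F_def using G[OF t that] that unfolding memC
        by (rule sigmoid_times_std_normal_product_ge)
    qed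
    then show "Zfun g t x = 0 \<or> c0 * measure lborel C \<le> Zfun g t x"
      unfolding Zfun_def F_def[symmetric] by (metis not_integrable_integral_eq)
  qed
qed

lemma lambda0x_le:
  assumes c: "0 < c" and \<phi>: "0 \<le> \<phi>" and Z: "Zfun g t x = 0 \<or> c \<le> Zfun g t x"
  shows "lambda0x \<rho> g \<phi> t x \<le> \<phi> / c * t powr (\<rho> - 1)"
  \<comment> \<open>if \<open>Zfun g t x = 0\<close> then \<open>lambda0x \<rho> g \<phi> t x = 0\<close>, as \<open>u / 0 = 0\<close>\<close>
  using Z
proof
  assume "c \<le> Zfun g t x"
  then have "\<phi> * t powr (\<rho> - 1) / Zfun g t x \<le> \<phi> * t powr (\<rho> - 1) / c"
    using c \<phi> by (intro divide_left_mono) auto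
  then show ?thesis unfolding lambda0x_def lambda0_def by simp
qed (use c \<phi> in \<open>simp add: lambda0x_def\<close>)

lemma nn_integral_PG_intensity_less_top:
  fixes g :: "real \<Rightarrow> 'p \<Rightarrow> real^'m \<Rightarrow> real"
  assumes \<rho>: "0 < \<rho>" and \<phi>: "0 \<le> \<phi>" and b: "0 < b" and Y: "0 \<le> Y"
    and cont: "continuous_on ({0..Y} \<times> UNIV) (\<lambda>(t, th). g t x th)"
  shows "(\<integral>\<^sup>+ p. ennreal ((\<lambda>(t, \<omega>). indicator ({0..Y} \<times> {0..}) (t, \<omega>) *
                                 lambda0x \<rho> g \<phi> t x * p_PG b c \<omega>) p) \<partial>lborel) < \<infinity>"
    (is "(\<integral>\<^sup>+ p. ennreal (?lam p) \<partial>lborel) < \<infinity>")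
proof -
  obtain \<epsilon> where \<epsilon>: "0 < \<epsilon>" and Z: "\<And>t. t \<in> {0..Y} \<Longrightarrow> Zfun g t x = 0 \<or> \<epsilon> \<le> Zfun g t x"
    using Zfun_bounded_below[of "{0..Y}" g x] cont by blast
  define f0 where "f0 t = \<phi> / \<epsilon> * (indicator {0..Y} t * t powr (\<rho> - 1))" for t
  define f where "f t = ennreal (f0 t)" for t
  define h where "h \<omega> = ennreal (p_PG b c \<omega>)" for \<omega>
  have f: "f \<in> borel_measurable lborel" and h: "h \<in> borel_measurable lborel"
    unfolding f_def f0_def h_def p_PG_def by measurable
  have p_PG_nonneg: "0 \<le> p_PG b c \<omega>" for \<omega>
    by (simp add: p_PG_def)
  have bound: "?lam (t, \<omega>) \<le> f0 t * p_PG b c \<omega>" for t \<omega>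
  proof (cases "t \<in> {0..Y}")
    case True
    then have "lambda0x \<rho> g \<phi> t x \<le> \<phi> / \<epsilon> * t powr (\<rho> - 1)"
      by (intro lambda0x_le[OF \<epsilon> \<phi> Z])
    then show ?thesis
      using True \<phi> \<epsilon> p_PG_nonneg[of \<omega>] unfolding f0_def
      by (auto simp: indicator_def simp del: times_divide_eq_left intro: mult_right_mono)
  qed (auto simp: indicator_def f0_def)
  have "(\<integral>\<^sup>+ p. ennreal (?lam p) \<partial>lborel) \<le> (\<integral>\<^sup>+ p. f (fst p) * h (snd p) \<partial>lborel)"
    unfolding f_def h_def using bound p_PG_nonneg
    by (intro nn_integral_mono) (auto simp: ennreal_mult''[symmetric] intro!: ennreal_leI)
  also have "\<dots> = (\<integral>\<^sup>+ t. f t \<partial>lborel) * (\<integral>\<^sup>+ \<omega>. h \<omega> \<partial>lborel)"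
    using f h by (rule nn_integral_lborel_pair_mult)
  also have "\<dots> < \<infinity>"
  proof -
    have "f t = ennreal (\<phi> / \<epsilon>) * ennreal (indicator {0..Y} t * t powr (\<rho> - 1))" for t
      unfolding f_def f0_def using \<phi> \<epsilon> by (intro ennreal_mult') simp
    then have "(\<integral>\<^sup>+ t. f t \<partial>lborel)
        = ennreal (\<phi> / \<epsilon>) * (\<integral>\<^sup>+ t. ennreal (indicator {0..Y} t * t powr (\<rho> - 1)) \<partial>lborel)"
      by (simp only:) (rule nn_integral_cmult, measurable)
    also have "\<dots> < \<infinity>"
      using nn_integral_powr_less_top[OF \<rho> Y] by (simp add: ennreal_mult_less_top)
    finally show ?thesis
      using nn_integral_p_PG_le_1[OF b, of c] unfolding h_def
      by (simp add: ennreal_mult_less_top order_le_less_trans)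
  qed
  finally show ?thesis .
qed

lemma nn_integral_less_top_integer_valued:
  fixes h :: "'a \<Rightarrow> real"
  assumes int: "\<And>A. A \<in> sets \<nu> \<Longrightarrow> emeasure \<nu> A \<in> insert \<infinity> (range of_nat)"
    and fin: "emeasure \<nu> (space \<nu>) < \<infinity>" and h: "h \<in> borel_measurable \<nu>"
  shows "(\<integral>\<^sup>+ p. ennreal (h p) \<partial>\<nu>) < \<infinity>"
proof -
  define A where "A n = {p\<in>space \<nu>. real n \<le> h p}" for n :: nat
  have A: "A n \<in> sets \<nu>" for n
    unfolding A_def using h by measurable
  have "emeasure \<nu> (A n) \<le> emeasure \<nu> (space \<nu>)" for n
    using A by (intro emeasure_mono) (auto simp: A_def)
  then have A_fin: "emeasure \<nu> (A n) \<noteq> \<infinity>" for n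
    using fin by (metis linorder_not_less top.not_eq_extremum)
  have "(\<Inter>n. A n) = {}"
    by (auto simp: A_def) (meson not_le reals_Archimedean2)
  moreover have "decseq A"
    unfolding A_def decseq_def by auto
  ultimately have "(INF n. emeasure \<nu> (A n)) = 0"
    using INF_emeasure_decseq[of A \<nu>] A A_fin by (simp add: image_subset_iff)
  then obtain n where "emeasure \<nu> (A n) < 1"
    by (metis INF_less_iff zero_less_one)
  \<comment> \<open>an integer-valued measure below 1 vanishes, so \<open>h < n\<close> almost everywhere\<close>
  moreover obtain k where "emeasure \<nu> (A n) = of_nat k"
    using int[OF A] A_fin by blast
  ultimately have "A n \<in> null_sets \<nu>"
    using A by (cases k) auto
  then have "AE p in \<nu>. ennreal (h p) \<le> ennreal (real n)"
    by (rule AE_I') (auto simp: A_def intro: ennreal_leI)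
  then have "(\<integral>\<^sup>+ p. ennreal (h p) \<partial>\<nu>) \<le> (\<integral>\<^sup>+ p. ennreal (real n) \<partial>\<nu>)"
    by (rule nn_integral_mono_AE)
  also have "\<dots> < \<infinity>"
    using fin by (simp add: ennreal_mult_less_top)
  finally show ?thesis .
qed

lemma AE_poisson_count_less_top:
  fixes X :: "'a \<Rightarrow> ennreal"
  assumes "prob_space M" and X: "X \<in> borel_measurable M"
    and X_vals: "\<And>s. s \<in> space M \<Longrightarrow> X s \<in> insert \<infinity> (range of_nat)" and m: "0 \<le> m"
    and pmf: "\<And>n. measure M {s\<in>space M. X s = of_nat n} = exp (- m) * m ^ n / fact n"
  shows "AE s in M. X s < \<infinity>"
proof -
  interpret prob_space M by fact
  define S where "S n = {s\<in>space M. X s = of_nat n}" for n :: nat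
  have S: "range S \<subseteq> sets M" "disjoint_family S"
    unfolding S_def disjoint_family_on_def using X by auto
  have "{s\<in>space M. X s < \<infinity>} = (\<Union>n. S n)"
    using X_vals unfolding S_def by (fastforce simp: of_nat_less_top)
  then have "emeasure M {s\<in>space M. X s < \<infinity>} = (\<Sum>n. ennreal (exp (- m) * m ^ n / fact n))"
    using suminf_emeasure[OF S] by (simp add: emeasure_eq_measure S_def pmf)
  also have "\<dots> = ennreal (exp (- m) * exp m)"
  proof -
    have "(\<lambda>n. exp (- m) * m ^ n / fact n) sums (exp (- m) * exp m)"
      using sums_mult[OF exp_converges[of m], of "exp (- m)"]
      by (simp add: scaleR_conv_of_real divide_inverse mult_ac)
    then show ?thesis
      using m by (subst suminf_ennreal2) (auto simp: sums_iff)
  qed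
  also have "\<dots> = 1"
    by (simp add: exp_minus)
  finally show ?thesis
    using X by (subst prob_Collect_eq_1[symmetric]) (auto simp: emeasure_eq_measure)
qed

lemma poisson_process_count_pmf:
  assumes "poisson_process M \<Psi> lam" and "A \<in> sets borel"
    and "(\<integral>\<^sup>+ p. ennreal (lam p) * indicator A p \<partial>lborel) < \<infinity>"
  shows "measure M {s\<in>space M. emeasure (\<Psi> s) A = of_nat n}
    = exp (- enn2real (\<integral>\<^sup>+ p. ennreal (lam p) * indicator A p \<partial>lborel))
      * enn2real (\<integral>\<^sup>+ p. ennreal (lam p) * indicator A p \<partial>lborel) ^ n / fact n"
  using assms unfolding poisson_process_def Let_def by blast

lemma poisson_process_AE_count_less_top:
  assumes PP: "poisson_process M \<Psi> lam" and A: "A \<in> sets borel"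
    and fin: "(\<integral>\<^sup>+ p. ennreal (lam p) * indicator A p \<partial>lborel) < \<infinity>"
  shows "AE s in M. emeasure (\<Psi> s) A < \<infinity>"
proof (rule AE_poisson_count_less_top)
  show "measure M {s\<in>space M. emeasure (\<Psi> s) A = of_nat n}
    = exp (- enn2real (\<integral>\<^sup>+ p. ennreal (lam p) * indicator A p \<partial>lborel))
      * enn2real (\<integral>\<^sup>+ p. ennreal (lam p) * indicator A p \<partial>lborel) ^ n / fact n" for n
    by (rule poisson_process_count_pmf[OF PP A fin])
qed (use PP A in \<open>auto simp: poisson_process_def\<close>)

lemma poisson_process_AE_count_zero:
  assumes PP: "poisson_process M \<Psi> lam" and A: "A \<in> sets borel"
    and null: "(\<integral>\<^sup>+ p. ennreal (lam p) * indicator A p \<partial>lborel) = 0"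
  shows "AE s in M. emeasure (\<Psi> s) A = 0"
proof -
  interpret prob_space M
    using PP by (simp add: poisson_process_def)
  have "prob {s\<in>space M. emeasure (\<Psi> s) A = of_nat 0} = 1"
    using poisson_process_count_pmf[OF PP A, of 0] null by simp
  moreover have "(\<lambda>s. emeasure (\<Psi> s) A) \<in> borel_measurable M"
    using PP A by (simp add: poisson_process_def)
  ultimately show ?thesis
    by (subst prob_Collect_eq_1[symmetric]) auto
qed

lemma poisson_process_sample:
  assumes "poisson_process M \<Psi> lam" and "s \<in> space M"
  shows poisson_process_sets: "sets (\<Psi> s) = sets borel"
    and poisson_process_integer_valued: "A \<in> sets (\<Psi> s) \<Longrightarrow> emeasure (\<Psi> s) A \<in> insert \<infinity> (range of_nat)"
  using assms unfolding poisson_process_def by auto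

lemma poisson_process_AE_nn_integral_less_top:
  fixes h :: "real \<times> real \<Rightarrow> real"
  assumes PP: "poisson_process M \<Psi> lam" and B: "B \<in> sets borel"
    and fin: "(\<integral>\<^sup>+ p. ennreal (lam p) \<partial>lborel) < \<infinity>"
    and lam_outside: "\<And>p. p \<notin> B \<Longrightarrow> lam p = 0"
    and h: "(\<lambda>p. indicator B p * h p) \<in> borel_measurable borel"
  shows "AE s in M. (\<integral>\<^sup>+ p. ennreal (h p) \<partial>\<Psi> s) < \<infinity>"
proof -
  have "AE s in M. emeasure (\<Psi> s) UNIV < \<infinity>"
    using fin by (intro poisson_process_AE_count_less_top[OF PP]) simp_all
  moreover have "AE s in M. emeasure (\<Psi> s) (- B) = 0"
    using B lam_outside
    by (intro poisson_process_AE_count_zero[OF PP] nn_integral_zero') (auto simp: indicator_def)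
  ultimately show ?thesis
    using AE_space
  proof eventually_elim
    case (elim s)
    note sets = poisson_process_sets[OF PP \<open>s \<in> space M\<close>]
    have space: "space (\<Psi> s) = UNIV"
      using sets_eq_imp_space_eq[OF sets] by simp
    have "AE p in \<Psi> s. p \<in> B"
      using elim B sets by (intro AE_I'[of "- B"]) (auto simp: null_setsI)
    then have "(\<integral>\<^sup>+ p. ennreal (h p) \<partial>\<Psi> s) = (\<integral>\<^sup>+ p. ennreal (indicator B p * h p) \<partial>\<Psi> s)"
      by (intro nn_integral_cong_AE) (auto elim: eventually_mono)
    also have "\<dots> < \<infinity>"
    proof (rule nn_integral_less_top_integer_valued)
      show "emeasure (\<Psi> s) A \<in> insert \<infinity> (range of_nat)" if "A \<in> sets (\<Psi> s)" for A
        using poisson_process_integer_valued[OF PP \<open>s \<in> space M\<close> that] .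
      show "emeasure (\<Psi> s) (space (\<Psi> s)) < \<infinity>"
        using elim space by simp
      show "(\<lambda>p. indicator B p * h p) \<in> borel_measurable (\<Psi> s)"
        unfolding measurable_cong_sets[OF sets refl] by (rule h)
    qed
    finally show ?case .
  qed
qed

theorem mainTheorem4:
  fixes N :: nat and y :: "nat \<Rightarrow> real" and xs :: "nat \<Rightarrow> real^'p"
    and g :: "real \<Rightarrow> real^'p \<Rightarrow> real^'m \<Rightarrow> real"
    and \<rho> \<phi> :: real and \<theta> :: "real^'m"
    and M :: "'a measure" and \<Psi> :: "nat \<Rightarrow> 'a \<Rightarrow> (real \<times> real) measure"
  assumes y_pos: "\<forall>i\<in>{1..N}. 0 < y i"
    and rho_pos: "0 < \<rho>"
    and g_cont: "\<forall>i\<in>{1..N}. continuous_on ({0..y i} \<times> UNIV) (\<lambda>(t, th). g t (xs i) th)"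
    and phi_pos: "0 < \<phi>"
    and PPP: "\<forall>i\<in>{1..N}. poisson_process M (\<Psi> i)
               (\<lambda>(t, \<omega>). indicator ({0..y i} \<times> {0..}) (t, \<omega>) *
                          lambda0x \<rho> g \<phi> t (xs i) * p_PG 1 0 \<omega>)"
  shows "\<forall>i\<in>{1..N}. AE s in M.
           (\<integral>\<^sup>+ p. ennreal \<bar>fPG (snd p) (- g (fst p) (xs i) \<theta>)\<bar> \<partial>(\<Psi> i s)) < \<infinity>"
proof
  fix i assume i: "i \<in> {1..N}"
  define B :: "(real \<times> real) set" where "B = {0..y i} \<times> {0..}"
  have B_borel: "B \<in> sets borel"
    unfolding B_def by (intro borel_closed closed_Times) auto
  have cont: "continuous_on ({0..y i} \<times> UNIV) (\<lambda>(t, th). g t (xs i) th)"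
    using g_cont i by blast
  have "continuous_on B (\<lambda>p. (\<lambda>(t, th). g t (xs i) th) (fst p, \<theta>))"
    unfolding B_def by (rule continuous_on_compose2[OF cont]) (auto intro!: continuous_intros)
  then have "continuous_on B (\<lambda>p. \<bar>fPG (snd p) (- g (fst p) (xs i) \<theta>)\<bar>)"
    unfolding fPG_def by (auto intro!: continuous_intros)
  then have h: "(\<lambda>p. indicator B p * \<bar>fPG (snd p) (- g (fst p) (xs i) \<theta>)\<bar>) \<in> borel_measurable borel"
    using borel_measurable_continuous_on_indicator[OF B_borel] by fastforce
  let ?lam = "\<lambda>(t, \<omega>). indicator B (t, \<omega>) * lambda0x \<rho> g \<phi> t (xs i) * p_PG 1 0 \<omega>"
  have PP: "poisson_process M (\<Psi> i) ?lam"
    using PPP i by (simp add: B_def)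
  have "(\<integral>\<^sup>+ p. ennreal (?lam p) \<partial>lborel) < \<infinity>"
    unfolding B_def using rho_pos phi_pos y_pos i cont
    by (intro nn_integral_PG_intensity_less_top) (auto intro: less_imp_le)
  from poisson_process_AE_nn_integral_less_top[OF PP B_borel this _ h]
  show "AE s in M. (\<integral>\<^sup>+ p. ennreal \<bar>fPG (snd p) (- g (fst p) (xs i) \<theta>)\<bar> \<partial>\<Psi> i s) < \<infinity>"
    by (auto simp: indicator_def)
qed

end
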